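(* For any values of $k$, $\mu$, $\nu$, and for $\lambda\neq0$, \[ \,_{3}F_{4}\left(\tfrac{1}{2},\tfrac{\mu}{2}+\tfrac{\nu}{2}+\tfrac{1}{2},\tfrac{\mu}{2}+\tfrac{\nu}{2}+1;\lambda+1,\mu+1,\nu+1,\mu+\nu+1;-k^{2}\right) =\frac{\Gamma(\lambda+1)2^{\mu+\nu}\Gamma(\mu+1)\Gamma(\nu+1)}{\sqrt{\pi}\,\Gamma\left(\lambda+\frac{1}{2}\right)\Gamma(\lambda)^{2}} \sum_{L=0}^{\infty}\frac{(-1)^{2L}k^{4L}\left(\left(\lambda+\frac{1}{2}\right)_{2L}\right)^{2}\Gamma(2L+2\lambda)\,2^{4L-2\lambda-\mu-\nu+1}}{(2L)!\,(2L+\lambda)\left((2\lambda)_{2L}\right)^{2}\left((2L+2\lambda)_{2L}\right)^{2}\left(L+\frac{1}{2}\right)_{\mu+\frac{1}{2}}\left(L+\frac{1}{2}\right)_{\nu+\frac{1}{2}}} \,_{1}F_{2}\left(L+\tfrac{1}{2};2L+\lambda+1,L+\mu+1;-\tfrac{k^{2}}{4}\right)\,_{1}F_{2}\left(L+\tfrac{1}{2};2L+\lambda+1,L+\nu+1;-\tfrac{k^{2}}{4}\right). \]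
   Context: $\,_{p}F_{q}(a_1,\dots,a_p;b_1,\dots,b_q;z)=\sum_{n\ge0}\frac{(a_1)_n\cdots(a_p)_n}{(b_1)_n\cdots(b_q)_n}\frac{z^n}{n!}$ is the generalized hypergeometric function. $(c)_g=\Gamma(c+g)/\Gamma(c)$ denotes the Pochhammer symbol (for arbitrary, possibly non-integer, $g$). *)

theory Defs
  imports "HOL-Analysis.Analysis"
begin

definition hypF :: "complex list \<Rightarrow> complex list \<Rightarrow> complex \<Rightarrow> complex" where
  "hypF as bs z = (\<Sum>n. (\<Prod>a\<leftarrow>as. pochhammer a n) / (\<Prod>b\<leftarrow>bs. pochhammer b n)
                         * z ^ n / fact n)"

definition gpoch :: "complex \<Rightarrow> complex \<Rightarrow> complex" where
  "gpoch c g = Gamma (c + g) / Gamma c"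

end

theory Submission
  imports Defs
begin

(* Multiplying the L-th summand by the prefactor, Legendre's duplication formula removes all Gamma
   factors, and expanding the two 1F2's turns the right-hand side into an absolutely convergent
   triple series in z = -k^2 over (L, i, j).  Collecting the terms with p = L + i and q = L + j,
   the finite sum over L is a terminating very-well-poised 5F4, which Dougall's theorem (proved here
   by a WZ pair) evaluates to (1/2)_(p+q) / (4^(p+q) (lam+1)_(p+q) p! q!).  Collecting then by
   n = p + q, the Chu-Vandermonde identity and the duplication formula for Pochhammer symbols give
   exactly the coefficients of the 3F4. *)

lemma not_nonpos_Ints_add_of_nat:
  fixes z :: "'a :: ring_1"
  assumes "z \<notin> \<int>\<^sub>\<le>\<^sub>0"
  shows "z + of_nat n \<notin> \<int>\<^sub>\<le>\<^sub>0"
  using nonpos_Ints_diff_Nats[of "z + of_nat n" "of_nat n"] assms by auto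

lemma add_of_nat_neq_0:
  fixes z :: "'a :: ring_1"
  assumes "z \<notin> \<int>\<^sub>\<le>\<^sub>0"
  shows "z + of_nat n \<noteq> 0"
  using not_nonpos_Ints_add_of_nat[OF assms, of n] by auto

lemma pochhammer_add_of_nat_neq_0:
  fixes z :: "'a :: field_char_0"
  assumes "z \<notin> \<int>\<^sub>\<le>\<^sub>0"
  shows "pochhammer (z + of_nat n) m \<noteq> 0"
  using not_nonpos_Ints_add_of_nat[OF assms, of n] pochhammer_eq_0_imp_nonpos_Int by blast

lemma odd_of_nat_neq_0: "(2 * of_nat n + 1 :: 'a :: field_char_0) \<noteq> 0"
proof -
  have "(2 * of_nat n + 1 :: 'a) = of_nat (2 * n + 1)" by simp
  then show ?thesis by (simp only: of_nat_eq_0_iff)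
qed

lemma half_plus_of_nat_neq_0: "(1/2 + of_nat n :: 'a :: field_char_0) \<noteq> 0"
proof
  assume "1/2 + of_nat n = (0 :: 'a)"
  then have "2 * of_nat n + 1 = (0 :: 'a)" by (simp add: field_simps)
  then show False using odd_of_nat_neq_0 by blast
qed

lemma pochhammer_half_neq_0: "pochhammer (1/2 :: 'a :: field_char_0) n \<noteq> 0"
  using half_plus_of_nat_neq_0 by (auto simp: pochhammer_eq_0_iff eq_neg_iff_add_eq_0)

lemma not_nonpos_Ints_half_double:
  fixes z :: "'a :: field_char_0"
  assumes "2 * z \<notin> \<int>\<^sub>\<le>\<^sub>0"
  shows "z \<notin> \<int>\<^sub>\<le>\<^sub>0" and "z + 1/2 \<notin> \<int>\<^sub>\<le>\<^sub>0"
proof -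
  show "z \<notin> \<int>\<^sub>\<le>\<^sub>0"
    using Nats_mult_nonpos_Ints[of 2 z] assms by auto
  have "2 * z = 2 * (z + 1/2) - 1" by (simp add: algebra_simps)
  then show "z + 1/2 \<notin> \<int>\<^sub>\<le>\<^sub>0"
    using Nats_mult_nonpos_Ints[of 2 "z + 1/2"] nonpos_Ints_diff_Nats[of "2 * (z + 1/2)" 1] assms
    by auto
qed

definition hypF_term :: "complex list \<Rightarrow> complex list \<Rightarrow> complex \<Rightarrow> nat \<Rightarrow> complex" where
  "hypF_term as bs z n = (\<Prod>a\<leftarrow>as. pochhammer a n) / (\<Prod>b\<leftarrow>bs. pochhammer b n) * z ^ n / fact n"

lemma hypF_eq_suminf: "hypF as bs z = (\<Sum>n. hypF_term as bs z n)"
  unfolding hypF_def hypF_term_def ..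

lemma hypF_term_1F2: "hypF_term [a] [b, c] z n = pochhammer a n / (pochhammer b n * pochhammer c n) * z ^ n / fact n"
  by (simp add: hypF_term_def)

section \<open>Dougall's terminating very-well-poised sum\<close>

text \<open>The sum of \<open>dougall_term lam q p L\<close> over \<open>L\<close> is Dougall's \<open>\<^sub>5F\<^sub>4\<close> with parameters
  \<open>a = lam\<close>, \<open>b = lam + 1/2\<close>, \<open>c = -q\<close>, \<open>d = -p\<close>.\<close>

definition dougall_head :: "'a :: field_char_0 \<Rightarrow> nat \<Rightarrow> nat \<Rightarrow> 'a" where
  "dougall_head lam q L = pochhammer lam L * pochhammer (lam + 1/2) L * pochhammer (- of_nat q) L /
     (pochhammer (1/2) L * fact L * pochhammer (lam + 1 + of_nat q) L)"

definition dougall_term :: "'a :: field_char_0 \<Rightarrow> nat \<Rightarrow> nat \<Rightarrow> nat \<Rightarrow> 'a" where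
  "dougall_term lam q p L = (lam + 2 * of_nat L) / lam * dougall_head lam q L * pochhammer (- of_nat p) L
     / pochhammer (lam + 1 + of_nat p) L"

definition dougall_value :: "'a :: field_char_0 \<Rightarrow> nat \<Rightarrow> nat \<Rightarrow> 'a" where
  "dougall_value lam q p = pochhammer (1 + lam) p * pochhammer (1/2 + of_nat q) p /
     (pochhammer (1/2) p * pochhammer (1 + lam + of_nat q) p)"

definition dougall_ratio :: "'a :: field_char_0 \<Rightarrow> nat \<Rightarrow> nat \<Rightarrow> 'a" where
  "dougall_ratio lam q p = (1 + lam + of_nat p) * (2 * of_nat p + 2 * of_nat q + 1) /
     ((1 + 2 * of_nat p) * (1 + lam + of_nat q + of_nat p))"

text \<open>The WZ certificate of the summation, as produced by Zeilberger's algorithm.\<close>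

definition dougall_cert :: "'a :: field_char_0 \<Rightarrow> nat \<Rightarrow> nat \<Rightarrow> nat \<Rightarrow> 'a" where
  "dougall_cert lam q p L = - dougall_ratio lam q p * of_nat L * (2 * of_nat L - 1) * (of_nat L + lam + of_nat q)
     / ((2 * of_nat p + 2 * of_nat q + 1) * lam * (of_nat p + 1))
     * dougall_head lam q L * pochhammer (- of_nat p - 1) L / pochhammer (lam + 1 + of_nat p) L"

text \<open>All four terms of the WZ equation are rational multiples (in \<open>L\<close>) of this one.\<close>

definition dougall_core :: "'a :: field_char_0 \<Rightarrow> nat \<Rightarrow> nat \<Rightarrow> nat \<Rightarrow> 'a" where
  "dougall_core lam q p L = dougall_head lam q L * pochhammer (- of_nat p - 1) L
     / pochhammer (lam + 1 + of_nat p) (Suc L)"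

lemma dougall_head_Suc:
  fixes lam :: "'a :: field_char_0"
  assumes "lam \<notin> \<int>\<^sub>\<le>\<^sub>0"
  shows "dougall_head lam q (Suc L) = dougall_head lam q L
     * ((lam + of_nat L) * (lam + 1/2 + of_nat L) * (of_nat L - of_nat q))
     / ((1/2 + of_nat L) * (of_nat L + 1) * (lam + 1 + of_nat q + of_nat L))"
proof -
  have "lam + 1 + of_nat q + of_nat L \<noteq> 0"
    using add_of_nat_neq_0[OF assms, of "1 + q + L"] by (simp add: add_ac)
  moreover have "pochhammer (lam + 1 + of_nat q) L \<noteq> 0"
    using pochhammer_add_of_nat_neq_0[OF assms, of "Suc q"] by (simp add: add_ac)
  ultimately show ?thesis
    unfolding dougall_head_def pochhammer_Suc
    using half_plus_of_nat_neq_0[where 'a='a, of L] pochhammer_half_neq_0[where 'a='a, of L]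
    by (simp add: field_simps)
qed

lemma dougall_term_Suc_p:
  fixes lam :: "'a :: field_char_0"
  assumes "lam \<notin> \<int>\<^sub>\<le>\<^sub>0"
  shows "dougall_term lam q (Suc p) L = (lam + 2 * of_nat L) / lam * (lam + 1 + of_nat p) * dougall_core lam q p L"
proof -
  have e1: "(- of_nat (Suc p) :: 'a) = - of_nat p - 1" by simp
  have e2: "pochhammer (lam + 1 + of_nat p) (Suc L) = (lam + 1 + of_nat p) * pochhammer (lam + 1 + of_nat (Suc p)) L"
    by (simp add: pochhammer_rec add_ac)
  define P where "P = pochhammer (lam + 1 + of_nat (Suc p)) L"
  define C where "C = lam + 1 + of_nat p"
  define X where "X = pochhammer (- of_nat p - 1 :: 'a) L"
  define D where "D = dougall_head lam q L"
  have "P \<noteq> 0" using pochhammer_add_of_nat_neq_0[OF assms, of "Suc (Suc p)"] by (simp add: P_def add_ac)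
  moreover have "C \<noteq> 0" using add_of_nat_neq_0[OF assms, of "Suc p"] by (simp add: C_def add_ac)
  moreover have "lam \<noteq> 0" using add_of_nat_neq_0[OF assms, of 0] by simp
  ultimately show ?thesis
    unfolding dougall_term_def dougall_core_def e1 e2
    unfolding P_def[symmetric] C_def[symmetric] X_def[symmetric] D_def[symmetric]
    by (simp add: field_simps)
qed

lemma dougall_term_eq_core:
  fixes lam :: "'a :: field_char_0"
  assumes "lam \<notin> \<int>\<^sub>\<le>\<^sub>0"
  shows "dougall_term lam q p L = (lam + 2 * of_nat L) / lam * ((of_nat p + 1 - of_nat L) / (of_nat p + 1))
     * (lam + 1 + of_nat p + of_nat L) * dougall_core lam q p L"
proof -
  define X where "X = pochhammer (- of_nat p - 1 :: 'a) L"
  define Y where "Y = pochhammer (- of_nat p :: 'a) L"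
  define P where "P = pochhammer (lam + 1 + of_nat p) L"
  define C where "C = lam + 1 + of_nat p + of_nat L"
  define D where "D = dougall_head lam q L"
  define Q where "Q = (of_nat p + 1 :: 'a)"
  have Q: "Q \<noteq> 0" unfolding Q_def by (metis of_nat_Suc of_nat_neq_0 add.commute)
  have "(- of_nat p - 1) * Y = X * (- of_nat p - 1 + of_nat L)"
    unfolding X_def Y_def by (metis pochhammer_rec pochhammer_Suc diff_add_cancel)
  then have XY: "Y = X * ((of_nat p + 1 - of_nat L) / (of_nat p + 1))"
    using Q unfolding Q_def by (simp add: field_simps)
  have e2: "pochhammer (lam + 1 + of_nat p) (Suc L) = P * C"
    unfolding P_def C_def by (simp add: pochhammer_Suc)
  have "P \<noteq> 0" using pochhammer_add_of_nat_neq_0[OF assms, of "Suc p"] by (simp add: P_def add_ac)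
  moreover have "C \<noteq> 0" using add_of_nat_neq_0[OF assms, of "Suc p + L"] by (simp add: C_def add_ac)
  moreover have "lam \<noteq> 0" using add_of_nat_neq_0[OF assms, of 0] by simp
  ultimately show ?thesis
    unfolding dougall_term_def dougall_core_def Y_def[symmetric] XY e2
    unfolding P_def[symmetric] C_def[symmetric] X_def[symmetric] D_def[symmetric] Q_def[symmetric]
    using Q by (simp add: field_simps)
qed

lemma dougall_cert_eq_core:
  fixes lam :: "'a :: field_char_0"
  assumes "lam \<notin> \<int>\<^sub>\<le>\<^sub>0"
  shows "dougall_cert lam q p L = - dougall_ratio lam q p * of_nat L * (2 * of_nat L - 1)
     * (of_nat L + lam + of_nat q) * (lam + 1 + of_nat p + of_nat L)
     / ((2 * of_nat p + 2 * of_nat q + 1) * lam * (of_nat p + 1)) * dougall_core lam q p L"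
proof -
  define P where "P = pochhammer (lam + 1 + of_nat p) L"
  define C where "C = lam + 1 + of_nat p + of_nat L"
  define X where "X = pochhammer (- of_nat p - 1 :: 'a) L"
  define D where "D = dougall_head lam q L"
  define R where "R = dougall_ratio lam q p"
  define Z where "Z = (2 * of_nat p + 2 * of_nat q + 1) * lam * (of_nat p + 1 :: 'a)"
  have e: "pochhammer (lam + 1 + of_nat p) (Suc L) = P * C"
    unfolding P_def C_def by (simp add: pochhammer_Suc)
  have "lam \<noteq> 0" using add_of_nat_neq_0[OF assms, of 0] by simp
  moreover have "(of_nat p + 1 :: 'a) \<noteq> 0" by (metis of_nat_Suc of_nat_neq_0 add.commute)
  moreover have "(2 * of_nat p + 2 * of_nat q + 1 :: 'a) \<noteq> 0"
    using odd_of_nat_neq_0[where 'a='a, of "p + q"] by (simp add: distrib_left)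
  ultimately have "Z \<noteq> 0" by (simp add: Z_def)
  moreover have "P \<noteq> 0" using pochhammer_add_of_nat_neq_0[OF assms, of "Suc p"] by (simp add: P_def add_ac)
  moreover have "C \<noteq> 0" using add_of_nat_neq_0[OF assms, of "Suc p + L"] by (simp add: C_def add_ac)
  ultimately show ?thesis
    unfolding dougall_cert_def dougall_core_def e
    unfolding P_def[symmetric] C_def[symmetric] X_def[symmetric] D_def[symmetric] R_def[symmetric] Z_def[symmetric]
    by (simp add: field_simps)
qed

lemma dougall_cert_Suc_eq_core:
  fixes lam :: "'a :: field_char_0"
  assumes "lam \<notin> \<int>\<^sub>\<le>\<^sub>0"
  shows "dougall_cert lam q p (Suc L) = - dougall_ratio lam q p * 2 * (lam + of_nat L) * (lam + 1/2 + of_nat L)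
     * (of_nat L - of_nat q) * (of_nat L - of_nat p - 1)
     / ((2 * of_nat p + 2 * of_nat q + 1) * lam * (of_nat p + 1)) * dougall_core lam q p L"
proof -
  have cancel: "- R * N * B * A / Z * (D * ((lam + l) * (lam + 1/2 + l) * (l - q)) / ((B/2) * N * A))
      * (X * (- p - 1 + l)) / P
    = - R * 2 * (lam + l) * (lam + 1/2 + l) * (l - q) * (l - p - 1) / Z * (D * X / P)"
    if "B \<noteq> 0" "N \<noteq> 0" "A \<noteq> 0" "Z \<noteq> 0" "P \<noteq> 0" for R N B A Z D X P l q p :: 'a
    using that by (simp add: field_simps)
  have e: "pochhammer (- of_nat p - 1 :: 'a) (Suc L) = pochhammer (- of_nat p - 1) L * (- of_nat p - 1 + of_nat L)"
      "(of_nat (Suc L) :: 'a) = of_nat L + 1" "2 * (of_nat L + 1) - 1 = (2 * of_nat L + 1 :: 'a)"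
      "1/2 + of_nat L = (2 * of_nat L + 1 :: 'a) / 2"
      "of_nat L + 1 + lam + of_nat q = lam + 1 + of_nat q + of_nat L"
    by (simp_all add: pochhammer_Suc algebra_simps)
  have "lam \<noteq> 0" using add_of_nat_neq_0[OF assms, of 0] by simp
  moreover have "(of_nat p + 1 :: 'a) \<noteq> 0" by (metis of_nat_Suc of_nat_neq_0 add.commute)
  moreover have "(2 * of_nat p + 2 * of_nat q + 1 :: 'a) \<noteq> 0"
    using odd_of_nat_neq_0[where 'a='a, of "p + q"] by (simp add: distrib_left)
  ultimately have Z: "(2 * of_nat p + 2 * of_nat q + 1) * lam * (of_nat p + 1 :: 'a) \<noteq> 0" by simp
  have P: "pochhammer (lam + 1 + of_nat p) (Suc L) \<noteq> 0"
    using pochhammer_add_of_nat_neq_0[OF assms, of "Suc p"] by (simp add: add_ac)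
  have A: "lam + 1 + of_nat q + of_nat L \<noteq> 0"
    using add_of_nat_neq_0[OF assms, of "1 + q + L"] by (simp add: add_ac)
  have N: "(of_nat L + 1 :: 'a) \<noteq> 0" by (metis of_nat_Suc of_nat_neq_0 add.commute)
  show ?thesis
    unfolding dougall_cert_def dougall_core_def dougall_head_Suc[OF assms] e
    using cancel[OF odd_of_nat_neq_0 N A Z P, where R="dougall_ratio lam q p" and D="dougall_head lam q L"
        and X="pochhammer (- of_nat p - 1) L" and l="of_nat L" and q="of_nat q" and p="of_nat p"]
    by (simp add: mult.assoc)
qed

lemma dougall_wz_rational_identity:
  fixes lam l q p P1 H K W :: "'a :: field_char_0"
  assumes nz: "lam \<noteq> 0" "P1 \<noteq> 0" "H \<noteq> 0" "K \<noteq> 0" "W \<noteq> 0"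
    and eq: "P1 = p + 1" "H = 1 + 2 * p" "K = 1 + lam + q + p" "W = 2 * p + 2 * q + 1"
  shows "(lam + 2 * l) / lam * (lam + 1 + p) - ((1 + lam + p) * W / (H * K))
        * ((lam + 2 * l) / lam * ((P1 - l) / P1) * (lam + 1 + p + l))
     = (- ((1 + lam + p) * W / (H * K)) * 2 * (lam + l) * (lam + 1/2 + l) * (l - q) * (l - p - 1)
         / (W * lam * P1))
       - (- ((1 + lam + p) * W / (H * K)) * l * (2 * l - 1) * (l + lam + q) * (lam + 1 + p + l)
         / (W * lam * P1))"
proof -
  have "(lam + 2 * l) / lam * (lam + 1 + p) - ((1 + lam + p) * W / (H * K))
        * ((lam + 2 * l) / lam * ((P1 - l) / P1) * (lam + 1 + p + l))
     = (1 + lam + p) / (lam * P1 * H * K)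
        * ((lam + 2 * l) * P1 * H * K - W * (lam + 2 * l) * (P1 - l) * (lam + 1 + p + l))"
    using nz by (simp add: field_simps)
  also have "(lam + 2 * l) * P1 * H * K - W * (lam + 2 * l) * (P1 - l) * (lam + 1 + p + l)
     = - (lam + l) * (2 * lam + 1 + 2 * l) * (l - q) * (l - p - 1)
       + l * (2 * l - 1) * (l + lam + q) * (lam + 1 + p + l)"
    unfolding eq by algebra
  also have "(1 + lam + p) / (lam * P1 * H * K) * (- (lam + l) * (2 * lam + 1 + 2 * l) * (l - q) * (l - p - 1)
       + l * (2 * l - 1) * (l + lam + q) * (lam + 1 + p + l))
     = (- ((1 + lam + p) * W / (H * K)) * 2 * (lam + l) * (lam + 1/2 + l) * (l - q) * (l - p - 1)
         / (W * lam * P1))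
       - (- ((1 + lam + p) * W / (H * K)) * l * (2 * l - 1) * (l + lam + q) * (lam + 1 + p + l)
         / (W * lam * P1))"
    using nz by (simp add: field_simps)
  finally show ?thesis .
qed

lemma dougall_wz_equation:
  fixes lam :: "'a :: field_char_0"
  assumes "lam \<notin> \<int>\<^sub>\<le>\<^sub>0"
  shows "dougall_term lam q (Suc p) L - dougall_ratio lam q p * dougall_term lam q p L
       = dougall_cert lam q p (Suc L) - dougall_cert lam q p L"
proof -
  have "lam \<noteq> 0" using add_of_nat_neq_0[OF assms, of 0] by simp
  moreover have "(of_nat p + 1 :: 'a) \<noteq> 0" by (metis of_nat_Suc of_nat_neq_0 add.commute)
  moreover have "(1 + 2 * of_nat p :: 'a) \<noteq> 0"
    using odd_of_nat_neq_0[where 'a='a, of p] by (simp add: add.commute)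
  moreover have "1 + lam + of_nat q + of_nat p \<noteq> 0"
    using add_of_nat_neq_0[OF assms, of "1 + q + p"] by (simp add: add_ac)
  moreover have "(2 * of_nat p + 2 * of_nat q + 1 :: 'a) \<noteq> 0"
    using odd_of_nat_neq_0[where 'a='a, of "p + q"] by (simp add: distrib_left)
  ultimately have key: "a - dougall_ratio lam q p * b = c - d"
    if "a = (lam + 2 * of_nat L) / lam * (lam + 1 + of_nat p)"
      "b = (lam + 2 * of_nat L) / lam * ((of_nat p + 1 - of_nat L) / (of_nat p + 1)) * (lam + 1 + of_nat p + of_nat L)"
      "c = - dougall_ratio lam q p * 2 * (lam + of_nat L) * (lam + 1/2 + of_nat L) * (of_nat L - of_nat q)
         * (of_nat L - of_nat p - 1) / ((2 * of_nat p + 2 * of_nat q + 1) * lam * (of_nat p + 1))"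
      "d = - dougall_ratio lam q p * of_nat L * (2 * of_nat L - 1) * (of_nat L + lam + of_nat q)
         * (lam + 1 + of_nat p + of_nat L) / ((2 * of_nat p + 2 * of_nat q + 1) * lam * (of_nat p + 1))"
    for a b c d
    unfolding that dougall_ratio_def
    by (rule dougall_wz_rational_identity) (simp_all add: algebra_simps)
  have scale: "a * G - R * (b * G) = c * G - d * G" if "a - R * b = c - d" for a b c d R G :: 'a
    using arg_cong[OF that, of "\<lambda>x. x * G"] by (simp add: algebra_simps)
  show ?thesis
    unfolding dougall_term_Suc_p[OF assms] dougall_cert_Suc_eq_core[OF assms]
    unfolding dougall_term_eq_core[OF assms, of q p] dougall_cert_eq_core[OF assms, of q p L]
    using scale[OF key[OF refl refl refl refl]] by (simp only: mult.assoc)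
qed

lemma dougall_value_Suc:
  fixes lam :: "'a :: field_char_0"
  assumes "lam \<notin> \<int>\<^sub>\<le>\<^sub>0"
  shows "dougall_value lam q (Suc p) = dougall_ratio lam q p * dougall_value lam q p"
proof -
  define A1 where "A1 = pochhammer (1 + lam) p"
  define A2 where "A2 = pochhammer (1/2 + of_nat q :: 'a) p"
  define A3 where "A3 = pochhammer (1/2 :: 'a) p"
  define A4 where "A4 = pochhammer (1 + lam + of_nat q) p"
  have K: "1 + lam + of_nat q + of_nat p \<noteq> 0"
    using add_of_nat_neq_0[OF assms, of "1 + q + p"] by (simp add: add_ac)
  have H: "(1/2 :: 'a) + of_nat p \<noteq> 0" by (rule half_plus_of_nat_neq_0)
  have "dougall_ratio lam q p
      = (1 + lam + of_nat p) * (1/2 + of_nat q + of_nat p) / ((1/2 + of_nat p) * (1 + lam + of_nat q + of_nat p))"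
  proof -
    have "(1/2 :: 'a) + of_nat p = (1 + 2 * of_nat p) / 2"
        "(1/2 :: 'a) + of_nat q + of_nat p = (2 * of_nat p + 2 * of_nat q + 1) / 2"
      by (simp_all add: field_simps)
    then show ?thesis unfolding dougall_ratio_def by (simp only:) (simp add: divide_simps)
  qed
  moreover have "A3 \<noteq> 0" unfolding A3_def by (rule pochhammer_half_neq_0)
  moreover have "A4 \<noteq> 0"
    using pochhammer_add_of_nat_neq_0[OF assms, of "Suc q"] by (simp add: A4_def add_ac)
  ultimately show ?thesis
    unfolding dougall_value_def pochhammer_Suc
    unfolding A1_def[symmetric] A2_def[symmetric] A3_def[symmetric] A4_def[symmetric]
    using H K by (simp add: field_simps)
qed

theorem dougall_sum:
  fixes lam :: "'a :: field_char_0"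
  assumes "lam \<notin> \<int>\<^sub>\<le>\<^sub>0" and "p < N"
  shows "(\<Sum>L<N. dougall_term lam q p L) = dougall_value lam q p"
  using assms(2)
proof (induction p arbitrary: N)
  case 0
  then obtain M where M: "N = Suc M" by (cases N) auto
  have "lam \<noteq> 0" using add_of_nat_neq_0[OF assms(1), of 0] by simp
  then have "dougall_term lam q 0 0 = 1" by (simp add: dougall_term_def dougall_head_def)
  moreover have "dougall_term lam q 0 (Suc L) = 0" for L
    by (simp add: dougall_term_def pochhammer_0_left)
  ultimately show ?case unfolding M sum.lessThan_Suc_shift by (simp add: dougall_value_def)
next
  case (Suc p)
  have "(\<Sum>L<N. dougall_term lam q (Suc p) L)
      = (\<Sum>L<N. dougall_ratio lam q p * dougall_term lam q p L
                 + (dougall_cert lam q p (Suc L) - dougall_cert lam q p L))"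
    by (rule sum.cong) (auto simp: dougall_wz_equation[OF assms(1), symmetric])
  also have "\<dots> = dougall_ratio lam q p * (\<Sum>L<N. dougall_term lam q p L)
                  + (dougall_cert lam q p N - dougall_cert lam q p 0)"
    by (simp add: sum.distrib sum_distrib_left sum_lessThan_telescope)
  also have "dougall_cert lam q p N = 0"
  proof -
    have e: "(- of_nat p - 1 :: 'a) = - of_nat (Suc p)" by simp
    have "pochhammer (- of_nat p - 1 :: 'a) N = 0"
      unfolding e by (rule pochhammer_of_nat_eq_0_lemma) (use Suc.prems in simp)
    then show ?thesis by (simp add: dougall_cert_def)
  qed
  also have "dougall_cert lam q p 0 = 0" by (simp add: dougall_cert_def)
  also have "(\<Sum>L<N. dougall_term lam q p L) = dougall_value lam q p"
    using Suc by simp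
  finally show ?case by (simp add: dougall_value_Suc[OF assms(1)])
qed

section \<open>The coefficients of the triple series\<close>

text \<open>\<open>triple_coeff lam L i j\<close> is the coefficient of \<open>z ^ (2 * L + i + j) / ((\<mu> + 1)\<^sub>L\<^sub>+\<^sub>i (\<nu> + 1)\<^sub>L\<^sub>+\<^sub>j)\<close>
  in the expanded right-hand side; see \<open>triple_term\<close> and \<open>series_prefactor_outer_inner\<close> below.\<close>

definition triple_coeff :: "'a :: field_char_0 \<Rightarrow> nat \<Rightarrow> nat \<Rightarrow> nat \<Rightarrow> 'a" where
  "triple_coeff lam L i j = lam * pochhammer (1/2) (L + i) * pochhammer (1/2) (L + j)
     * (pochhammer (lam + 1/2) (2 * L))\<^sup>2 * 16 ^ L
   / (fact (2 * L) * (of_nat (2 * L) + lam) * pochhammer (2 * lam) (2 * L)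
      * (pochhammer (of_nat (2 * L) + 2 * lam) (2 * L))\<^sup>2
      * pochhammer (of_nat (2 * L) + lam + 1) i * pochhammer (of_nat (2 * L) + lam + 1) j
      * (fact i * fact j) * 4 ^ (i + j))"

definition pair_coeff :: "'a :: field_char_0 \<Rightarrow> nat \<Rightarrow> nat \<Rightarrow> 'a" where
  "pair_coeff lam p q = pochhammer (1/2) (p + q) / (4 ^ (p + q) * pochhammer (lam + 1) (p + q) * fact p * fact q)"

definition dougall_scale :: "'a :: field_char_0 \<Rightarrow> nat \<Rightarrow> nat \<Rightarrow> 'a" where
  "dougall_scale lam p q = pochhammer (1/2) p * pochhammer (1/2) q /
     (4 ^ (p + q) * pochhammer (lam + 1) p * pochhammer (lam + 1) q * fact p * fact q)"

lemma fact_double: "(fact (2 * n) :: 'a :: field_char_0) = 4 ^ n * pochhammer (1/2) n * fact n"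
  using pochhammer_double[of "1/2 :: 'a" n] by (simp add: pochhammer_fact power_mult)

lemma pochhammer_double_split:
  "pochhammer (2 * z :: 'a :: field_char_0) (2 * n) * pochhammer (of_nat (2 * n) + 2 * z) (2 * n)
     = 16 ^ n * pochhammer z (2 * n) * pochhammer (z + 1/2) (2 * n)"
proof -
  have "pochhammer (2 * z) (2 * n) * pochhammer (2 * z + of_nat (2 * n)) (2 * n) = pochhammer (2 * z) (2 * n + 2 * n)"
    by (rule pochhammer_product'[symmetric])
  also have "2 * n + 2 * n = 2 * (2 * n)" by simp
  also have "pochhammer (2 * z) (2 * (2 * n)) = of_nat (2 ^ (2 * (2 * n))) * pochhammer z (2 * n) * pochhammer (z + 1/2) (2 * n)"
    by (rule pochhammer_double)
  also have "(of_nat (2 ^ (2 * (2 * n))) :: 'a) = 16 ^ n" by (simp add: power_mult)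
  finally show ?thesis by (simp add: add.commute)
qed

lemma pochhammer_regroup:
  "pochhammer (z :: 'a :: comm_semiring_1) (2 * n) * (of_nat (2 * n) + z) * pochhammer (of_nat (2 * n) + z + 1) i
     = z * pochhammer (z + 1) (n + i) * pochhammer (z + 1 + of_nat (n + i)) n"
proof -
  have "pochhammer z (2 * n) * (of_nat (2 * n) + z) * pochhammer (of_nat (2 * n) + z + 1) i
      = pochhammer z (2 * n) * pochhammer (z + of_nat (2 * n)) (Suc i)"
    by (simp add: pochhammer_rec add.commute mult.assoc)
  also have "\<dots> = pochhammer z (2 * n + Suc i)"
    by (rule pochhammer_product'[symmetric])
  also have "2 * n + Suc i = Suc ((n + i) + n)" by simp
  also have "pochhammer z (Suc ((n + i) + n)) = z * pochhammer (z + 1) ((n + i) + n)"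
    by (rule pochhammer_rec)
  also have "pochhammer (z + 1) ((n + i) + n) = pochhammer (z + 1) (n + i) * pochhammer (z + 1 + of_nat (n + i)) n"
    by (rule pochhammer_product')
  finally show ?thesis by (simp only: mult.assoc)
qed

lemma pochhammer_minus_of_nat_mult_fact:
  "pochhammer (- of_nat (n + i) :: 'a :: {comm_ring_1, semiring_char_0}) n * fact i = (-1) ^ n * fact (n + i)"
proof -
  have "pochhammer (- of_nat (n + i) :: 'a) n = (-1) ^ n * pochhammer (1 + of_nat i) n"
    using pochhammer_minus[of "of_nat (n + i) :: 'a" n] by (simp add: add.commute)
  moreover have "pochhammer (1 :: 'a) (i + n) = pochhammer 1 i * pochhammer (1 + of_nat i) n"
    by (rule pochhammer_product')
  ultimately show ?thesis
    by (simp add: pochhammer_fact add.commute mult_ac)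
qed

lemma triple_coeff_reduced:
  fixes lam :: "'a :: field_char_0"
  assumes "2 * lam \<notin> \<int>\<^sub>\<le>\<^sub>0"
  shows "triple_coeff lam L i j = (lam + 2 * of_nat L) * pochhammer (1/2) (L + i) * pochhammer (1/2) (L + j)
       * pochhammer lam L * pochhammer (lam + 1/2) L
     / (lam * 16 ^ L * 4 ^ (i + j) * pochhammer (1/2) L * fact L
        * pochhammer (lam + 1) (L + i) * pochhammer (lam + 1 + of_nat (L + i)) L
        * pochhammer (lam + 1) (L + j) * pochhammer (lam + 1 + of_nat (L + j)) L * (fact i * fact j))"
proof -
  have lam: "lam \<notin> \<int>\<^sub>\<le>\<^sub>0" and lam_half: "lam + 1/2 \<notin> \<int>\<^sub>\<le>\<^sub>0"
    using not_nonpos_Ints_half_double[OF assms] by simp_all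
  define A where "A = pochhammer lam L"
  define B where "B = pochhammer (lam + 1/2) L"
  define C where "C = pochhammer (1/2 :: 'a) L"
  define P2 where "P2 = pochhammer lam (2 * L)"
  define Q2 where "Q2 = pochhammer (lam + 1/2) (2 * L)"
  define X2 where "X2 = pochhammer (2 * lam) (2 * L)"
  define Y2 where "Y2 = pochhammer (of_nat (2 * L) + 2 * lam) (2 * L)"
  define E where "E = of_nat (2 * L) + lam"
  define Ii where "Ii = pochhammer (of_nat (2 * L) + lam + 1) i"
  define Jj where "Jj = pochhammer (of_nat (2 * L) + lam + 1) j"
  define lp where "lp = pochhammer (lam + 1) (L + i)"
  define lq where "lq = pochhammer (lam + 1) (L + j)"
  define Mp where "Mp = pochhammer (lam + 1 + of_nat (L + i)) L"
  define Mq where "Mq = pochhammer (lam + 1 + of_nat (L + j)) L"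
  have nz: "A \<noteq> 0" "B \<noteq> 0" "C \<noteq> 0" "P2 \<noteq> 0" "Q2 \<noteq> 0" "X2 \<noteq> 0" "E \<noteq> 0" "lam \<noteq> 0"
    using pochhammer_add_of_nat_neq_0[OF lam, of 0] pochhammer_add_of_nat_neq_0[OF lam_half, of 0]
      pochhammer_add_of_nat_neq_0[OF assms, of 0] add_of_nat_neq_0[OF lam, of "2 * L"]
      add_of_nat_neq_0[OF lam, of 0] pochhammer_half_neq_0
    by (simp_all add: A_def B_def C_def P2_def Q2_def X2_def E_def add.commute)
  have nz': "lp \<noteq> 0" "lq \<noteq> 0" "Mp \<noteq> 0" "Mq \<noteq> 0"
    using pochhammer_add_of_nat_neq_0[OF lam, of 1] pochhammer_add_of_nat_neq_0[OF lam, of "Suc (L + i)"]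
      pochhammer_add_of_nat_neq_0[OF lam, of "Suc (L + j)"]
    by (simp_all add: lp_def lq_def Mp_def Mq_def add_ac)
  have Y2: "Y2 = 16 ^ L * P2 * Q2 / X2"
    using pochhammer_double_split[of lam L] nz by (simp add: X2_def Y2_def P2_def Q2_def field_simps)
  have X2: "X2 = 4 ^ L * A * B"
    unfolding X2_def A_def B_def using pochhammer_double[of lam L] by (simp add: power_mult)
  have F2: "fact (2 * L) = 4 ^ L * C * fact L" unfolding C_def by (rule fact_double)
  have "P2 * E * Ii = lam * lp * Mp" "P2 * E * Jj = lam * lq * Mq"
    unfolding Ii_def Jj_def lp_def lq_def Mp_def Mq_def P2_def E_def by (rule pochhammer_regroup)+
  then have Ii: "Ii = lam * lp * Mp / (P2 * E)" and Jj: "Jj = lam * lq * Mq / (P2 * E)"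
    using nz by (simp_all add: eq_divide_eq mult.commute)
  have sixteen: "(16 :: 'a) ^ L = 4 ^ L * 4 ^ L" by (simp flip: power_mult_distrib)
  have E: "lam + 2 * of_nat L = E" unfolding E_def by simp
  show ?thesis
    unfolding triple_coeff_def
    unfolding Ii_def[symmetric] Jj_def[symmetric] Y2_def[symmetric]
    unfolding A_def[symmetric] B_def[symmetric] C_def[symmetric] P2_def[symmetric] Q2_def[symmetric]
      X2_def[symmetric] E_def[symmetric] lp_def[symmetric] lq_def[symmetric] Mp_def[symmetric] Mq_def[symmetric] E
    unfolding Y2 Ii Jj F2 X2 sixteen
    using nz nz' by (simp add: field_simps power2_eq_square)
qed

lemma triple_coeff_eq_dougall_term:
  fixes lam :: "'a :: field_char_0"
  assumes "2 * lam \<notin> \<int>\<^sub>\<le>\<^sub>0"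
  shows "triple_coeff lam L i j = dougall_scale lam (L + i) (L + j) * dougall_term lam (L + j) (L + i) L"
proof -
  have lam: "lam \<notin> \<int>\<^sub>\<le>\<^sub>0" using not_nonpos_Ints_half_double[OF assms] by simp
  define Np where "Np = pochhammer (- of_nat (L + i) :: 'a) L"
  define Nq where "Nq = pochhammer (- of_nat (L + j) :: 'a) L"
  have Np: "Np * fact i = (-1) ^ L * fact (L + i)" and Nq: "Nq * fact j = (-1) ^ L * fact (L + j)"
    unfolding Np_def Nq_def by (rule pochhammer_minus_of_nat_mult_fact)+
  have "Np \<noteq> 0" "Nq \<noteq> 0" using Np Nq by auto
  have "(Np * fact i) * (Nq * fact j) = ((-1) ^ L * (-1) ^ L) * (fact (L + i) * fact (L + j) :: 'a)"
    using Np Nq by simp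
  also have "((-1 :: 'a) ^ L * (-1) ^ L) = 1" by (simp flip: power_add)
  finally have facts: "(fact i * fact j :: 'a) = fact (L + i) * fact (L + j) / (Np * Nq)"
    using \<open>Np \<noteq> 0\<close> \<open>Nq \<noteq> 0\<close> by (simp add: field_simps)
  have "lam \<noteq> 0" using add_of_nat_neq_0[OF lam, of 0] by simp
  moreover have "pochhammer (lam + 1) (L + i) \<noteq> 0" "pochhammer (lam + 1) (L + j) \<noteq> 0"
    "pochhammer (lam + 1 + of_nat (L + i)) L \<noteq> 0" "pochhammer (lam + 1 + of_nat (L + j)) L \<noteq> 0"
    using pochhammer_add_of_nat_neq_0[OF lam, of 1] pochhammer_add_of_nat_neq_0[OF lam, of "Suc (L + i)"]
      pochhammer_add_of_nat_neq_0[OF lam, of "Suc (L + j)"]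
    by (simp_all add: add_ac)
  moreover note \<open>Np \<noteq> 0\<close> \<open>Nq \<noteq> 0\<close>
  moreover have "pochhammer (1/2 :: 'a) L \<noteq> 0" by (rule pochhammer_half_neq_0)
  moreover have "(4 :: 'a) ^ (L + i + (L + j)) = 16 ^ L * 4 ^ (i + j)"
    by (simp add: power_add power_mult_distrib[symmetric] mult_ac)
  ultimately show ?thesis
    unfolding triple_coeff_reduced[OF assms] dougall_scale_def dougall_term_def dougall_head_def facts
    unfolding Np_def[symmetric] Nq_def[symmetric]
    by (simp add: field_simps)
qed

lemma dougall_scale_mult_value:
  fixes lam :: "'a :: field_char_0"
  assumes "lam \<notin> \<int>\<^sub>\<le>\<^sub>0"
  shows "dougall_scale lam p q * dougall_value lam q p = pair_coeff lam p q"
proof -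
  have "pochhammer (1/2 :: 'a) (q + p) = pochhammer (1/2) q * pochhammer (1/2 + of_nat q) p"
      "pochhammer (lam + 1) (q + p) = pochhammer (lam + 1) q * pochhammer (lam + 1 + of_nat q) p"
    by (rule pochhammer_product')+
  moreover have "pochhammer (lam + 1) p \<noteq> 0" "pochhammer (lam + 1) q \<noteq> 0"
      "pochhammer (lam + 1 + of_nat q) p \<noteq> 0"
    using pochhammer_add_of_nat_neq_0[OF assms, of 1] pochhammer_add_of_nat_neq_0[OF assms, of "Suc q"]
    by (simp_all add: add_ac)
  moreover have "pochhammer (1/2 :: 'a) p \<noteq> 0" by (rule pochhammer_half_neq_0)
  ultimately show ?thesis
    unfolding dougall_scale_def dougall_value_def pair_coeff_def add.commute[of p q]
    by (simp add: field_simps add_ac)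
qed

lemma triple_coeff_diagonal_sum:
  fixes lam :: "'a :: field_char_0"
  assumes "2 * lam \<notin> \<int>\<^sub>\<le>\<^sub>0"
  shows "(\<Sum>L\<le>min p q. triple_coeff lam L (p - L) (q - L)) = pair_coeff lam p q"
proof -
  have lam: "lam \<notin> \<int>\<^sub>\<le>\<^sub>0" using not_nonpos_Ints_half_double[OF assms] by simp
  have "(\<Sum>L\<le>min p q. triple_coeff lam L (p - L) (q - L)) = (\<Sum>L\<le>min p q. dougall_scale lam p q * dougall_term lam q p L)"
    by (rule sum.cong) (auto simp: triple_coeff_eq_dougall_term[OF assms])
  also have "\<dots> = dougall_scale lam p q * (\<Sum>L<Suc p. dougall_term lam q p L)"
  proof -
    have vanish: "dougall_term lam q p L = 0" if "q < L" for L
      using pochhammer_of_nat_eq_0_lemma[OF that, where 'a='a] by (simp add: dougall_term_def dougall_head_def)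
    have "(\<Sum>L\<le>min p q. dougall_term lam q p L) = (\<Sum>L<Suc p. dougall_term lam q p L)"
      by (rule sum.mono_neutral_left) (auto intro!: vanish)
    then show ?thesis by (simp only: sum_distrib_left[symmetric])
  qed
  also have "\<dots> = pair_coeff lam p q"
    using dougall_sum[OF lam, of p "Suc p" q] dougall_scale_mult_value[OF lam] by simp
  finally show ?thesis .
qed

lemma pochhammer_double_halves:
  fixes c :: "'a :: field_char_0"
  shows "pochhammer c n * pochhammer (c + of_nat n) n = 4 ^ n * pochhammer (c/2) n * pochhammer (c/2 + 1/2) n"
proof -
  have "pochhammer c n * pochhammer (c + of_nat n) n = pochhammer c (n + n)"
    by (rule pochhammer_product'[symmetric])
  also have "n + n = 2 * n" by simp
  also have "pochhammer c (2 * n) = pochhammer (2 * (c/2)) (2 * n)" by simp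
  also have "\<dots> = of_nat (2 ^ (2 * n)) * pochhammer (c/2) n * pochhammer (c/2 + 1/2) n"
    by (rule pochhammer_double)
  also have "(of_nat (2 ^ (2 * n)) :: 'a) = 4 ^ n" by (simp add: power_mult)
  finally show ?thesis .
qed

lemma chu_vandermonde_shifted:
  fixes a b :: "'a :: comm_ring_1"
  shows "(\<Sum>p\<le>n. of_nat (n choose p) * pochhammer (a + 1 + of_nat p) (n - p) * pochhammer (b + 1 + of_nat (n - p)) p)
       = pochhammer (a + b + 1 + of_nat n) n"
proof -
  have "of_nat (n choose p) * pochhammer (a + 1 + of_nat p) (n - p) * pochhammer (b + 1 + of_nat (n - p)) p
     = (-1) ^ n * (of_nat (n choose p) * pochhammer (- (b + of_nat n)) p * pochhammer (- (a + of_nat n)) (n - p))"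
    if "p \<le> n" for p
  proof -
    have A: "pochhammer (a + 1 + of_nat p) (n - p) = (-1) ^ (n - p) * pochhammer (- (a + of_nat n)) (n - p)"
      using pochhammer_minus'[of "a + of_nat n" "n - p"] that by (simp add: of_nat_diff algebra_simps)
    have B: "pochhammer (b + 1 + of_nat (n - p)) p = (-1) ^ p * pochhammer (- (b + of_nat n)) p"
      using pochhammer_minus'[of "b + of_nat n" p] that by (simp add: of_nat_diff algebra_simps)
    have "of_nat (n choose p) * pochhammer (a + 1 + of_nat p) (n - p) * pochhammer (b + 1 + of_nat (n - p)) p
        = ((-1) ^ (n - p) * (-1) ^ p) * (of_nat (n choose p) * pochhammer (- (b + of_nat n)) p
            * pochhammer (- (a + of_nat n)) (n - p))"
      unfolding A B by (simp only: mult_ac)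
    also have "((-1) :: 'a) ^ (n - p) * (-1) ^ p = (-1) ^ n" using that by (simp flip: power_add)
    finally show ?thesis .
  qed
  then have "(\<Sum>p\<le>n. of_nat (n choose p) * pochhammer (a + 1 + of_nat p) (n - p) * pochhammer (b + 1 + of_nat (n - p)) p)
     = (-1) ^ n * (\<Sum>p\<le>n. of_nat (n choose p) * pochhammer (- (b + of_nat n)) p * pochhammer (- (a + of_nat n)) (n - p))"
    unfolding sum_distrib_left by (intro sum.cong) auto
  also have "\<dots> = (-1) ^ n * pochhammer (- (a + b + 2 * of_nat n)) n"
    using pochhammer_binomial_sum[of "- (b + of_nat n)" "- (a + of_nat n)" n] by (simp add: algebra_simps)
  also have "\<dots> = pochhammer (a + b + 1 + of_nat n) n"
    using pochhammer_minus'[of "a + b + 2 * of_nat n" n] by (simp add: algebra_simps)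
  finally show ?thesis .
qed

lemma pair_coeff_antidiagonal_sum:
  fixes lam a b :: "'a :: field_char_0"
  assumes "lam \<notin> \<int>\<^sub>\<le>\<^sub>0" "a + 1 \<notin> \<int>\<^sub>\<le>\<^sub>0" "b + 1 \<notin> \<int>\<^sub>\<le>\<^sub>0" "a + b + 1 \<notin> \<int>\<^sub>\<le>\<^sub>0"
  shows "(\<Sum>p\<le>n. pair_coeff lam p (n - p) / (pochhammer (a + 1) p * pochhammer (b + 1) (n - p)))
     = pochhammer (1/2) n * (pochhammer (a/2 + b/2 + 1/2) n * pochhammer (a/2 + b/2 + 1) n)
       / (pochhammer (lam + 1) n * (pochhammer (a + 1) n * (pochhammer (b + 1) n * pochhammer (a + b + 1) n)))
       / fact n"
proof -
  have na: "pochhammer (a + 1) p \<noteq> 0" and nb: "pochhammer (b + 1) p \<noteq> 0" for p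
    using pochhammer_add_of_nat_neq_0[OF assms(2), of 0] pochhammer_add_of_nat_neq_0[OF assms(3), of 0] by simp_all
  have nab: "pochhammer (a + b + 1) n \<noteq> 0"
    using pochhammer_add_of_nat_neq_0[OF assms(4), of 0] by simp
  have nl: "pochhammer (lam + 1) n \<noteq> 0"
    using pochhammer_add_of_nat_neq_0[OF assms(1), of 1] by simp
  define c where "c = pochhammer (1/2 :: 'a) n
    / (4 ^ n * pochhammer (lam + 1) n * fact n * pochhammer (a + 1) n * pochhammer (b + 1) n)"
  have "pair_coeff lam p (n - p) / (pochhammer (a + 1) p * pochhammer (b + 1) (n - p))
     = c * (of_nat (n choose p) * pochhammer (a + 1 + of_nat p) (n - p) * pochhammer (b + 1 + of_nat (n - p)) p)"
    if "p \<le> n" for p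
  proof -
    have "pochhammer (a + 1 + of_nat p) (n - p) = pochhammer (a + 1) n / pochhammer (a + 1) p"
      using pochhammer_product[OF that, of "a + 1"] na by (simp add: field_simps)
    moreover have "pochhammer (b + 1 + of_nat (n - p)) p = pochhammer (b + 1) n / pochhammer (b + 1) (n - p)"
      using pochhammer_product[of "n - p" n "b + 1"] that nb by (simp add: field_simps)
    moreover have "(of_nat (n choose p) :: 'a) = fact n / (fact p * fact (n - p))"
      using binomial_fact[OF that] by simp
    moreover have "p + (n - p) = n" using that by simp
    ultimately show ?thesis
      unfolding pair_coeff_def c_def using na nb nl by (simp add: field_simps)
  qed
  then have "(\<Sum>p\<le>n. pair_coeff lam p (n - p) / (pochhammer (a + 1) p * pochhammer (b + 1) (n - p)))
      = c * (\<Sum>p\<le>n. of_nat (n choose p) * pochhammer (a + 1 + of_nat p) (n - p)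
               * pochhammer (b + 1 + of_nat (n - p)) p)"
    unfolding sum_distrib_left by (intro sum.cong) auto
  also have "\<dots> = c * pochhammer (a + b + 1 + of_nat n) n"
    by (simp only: chu_vandermonde_shifted)
  also have "\<dots> = pochhammer (1/2) n * (pochhammer (a/2 + b/2 + 1/2) n * pochhammer (a/2 + b/2 + 1) n)
       / (pochhammer (lam + 1) n * (pochhammer (a + 1) n * (pochhammer (b + 1) n * pochhammer (a + b + 1) n)))
       / fact n"
  proof -
    have "(a + b + 1) / 2 = a/2 + b/2 + 1/2" "(a + b + 1) / 2 + 1/2 = a/2 + b/2 + 1"
      by (simp_all add: field_simps)
    then have "pochhammer (a + b + 1 + of_nat n) n
        = 4 ^ n * pochhammer (a/2 + b/2 + 1/2) n * pochhammer (a/2 + b/2 + 1) n / pochhammer (a + b + 1) n"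
      using pochhammer_double_halves[of "a + b + 1" n] nab by (simp add: field_simps)
    then show ?thesis unfolding c_def using nab nl na nb by (simp add: field_simps)
  qed
  finally show ?thesis .
qed

definition triple_term :: "complex \<Rightarrow> complex \<Rightarrow> complex \<Rightarrow> complex \<Rightarrow> nat \<Rightarrow> nat \<Rightarrow> nat \<Rightarrow> complex" where
  "triple_term lam \<mu> \<nu> z L i j = z ^ (2 * L + i + j) * triple_coeff lam L i j
     / (pochhammer (\<mu> + 1) (L + i) * pochhammer (\<nu> + 1) (L + j))"

definition series_prefactor :: "complex \<Rightarrow> complex \<Rightarrow> complex \<Rightarrow> complex" where
  "series_prefactor lam \<mu> \<nu> = Gamma (lam + 1) * 2 powr (\<mu> + \<nu>) * Gamma (\<mu> + 1) * Gamma (\<nu> + 1)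
     / (of_real (sqrt pi) * Gamma (lam + 1/2) * (Gamma lam)\<^sup>2)"

definition outer_coeff :: "complex \<Rightarrow> complex \<Rightarrow> complex \<Rightarrow> complex \<Rightarrow> nat \<Rightarrow> complex" where
  "outer_coeff lam \<mu> \<nu> k L = (-1) ^ (2*L) * k ^ (4*L) * (pochhammer (lam + 1/2) (2*L))\<^sup>2 * Gamma (of_nat (2*L) + 2*lam)
      * 2 powr (of_nat (4*L) - 2*lam - \<mu> - \<nu> + 1)
      / (fact (2*L) * (of_nat (2*L) + lam) * (pochhammer (2*lam) (2*L))\<^sup>2
         * (pochhammer (of_nat (2*L) + 2*lam) (2*L))\<^sup>2
         * gpoch (of_nat L + 1/2) (\<mu> + 1/2) * gpoch (of_nat L + 1/2) (\<nu> + 1/2))"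

lemma Gamma_add_of_nat:
  fixes z :: complex
  assumes "z \<notin> \<int>\<^sub>\<le>\<^sub>0"
  shows "Gamma (z + of_nat n) = Gamma z * pochhammer z n"
  using pochhammer_Gamma[OF assms, of n] Gamma_nonzero[OF assms] by (simp add: field_simps)

lemma gpoch_half:
  fixes \<mu> :: complex
  assumes "\<mu> + 1 \<notin> \<int>\<^sub>\<le>\<^sub>0"
  shows "gpoch (of_nat L + 1/2) (\<mu> + 1/2) = Gamma (\<mu> + 1) * pochhammer (\<mu> + 1) L / (of_real (sqrt pi) * pochhammer (1/2) L)"
proof -
  have half: "(1/2 :: complex) \<notin> \<int>\<^sub>\<le>\<^sub>0"
    using fraction_not_in_Ints[where 'a=complex, of 2 1] nonpos_Ints_subset_Ints by auto
  have e: "of_nat L + 1/2 + (\<mu> + 1/2) = (\<mu> + 1) + of_nat L" "of_nat L + 1/2 = (1/2 :: complex) + of_nat L"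
    by (simp_all add: algebra_simps)
  show ?thesis
    unfolding gpoch_def e(1) unfolding e(2)
    unfolding Gamma_add_of_nat[OF assms] Gamma_add_of_nat[OF half] Gamma_one_half_complex by simp
qed

lemma complex_two_powr: "(2 :: complex) powr z = exp (z * of_real (ln 2))"
  using Ln_of_real[of 2] by (simp add: powr_def)

lemma Gamma_legendre_duplication_powr:
  fixes z :: complex
  assumes "2 * z \<notin> \<int>\<^sub>\<le>\<^sub>0"
  shows "Gamma z * Gamma (z + 1/2) = 2 powr (1 - 2 * z) * of_real (sqrt pi) * Gamma (2 * z)"
  using Gamma_legendre_duplication[OF not_nonpos_Ints_half_double[OF assms]]
  by (simp add: complex_two_powr)

text \<open>Here the duplication formula makes all the Gamma factors cancel.\<close>

lemma series_prefactor_mult_outer_coeff: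
  fixes lam \<mu> \<nu> k :: complex
  assumes lam2: "2 * lam \<notin> \<int>\<^sub>\<le>\<^sub>0" and \<mu>: "\<mu> + 1 \<notin> \<int>\<^sub>\<le>\<^sub>0" and \<nu>: "\<nu> + 1 \<notin> \<int>\<^sub>\<le>\<^sub>0"
  shows "series_prefactor lam \<mu> \<nu> * outer_coeff lam \<mu> \<nu> k L
     = lam * k ^ (4 * L) * (pochhammer (lam + 1/2) (2 * L))\<^sup>2 * 16 ^ L * (pochhammer (1/2) L)\<^sup>2
       / (fact (2 * L) * (of_nat (2 * L) + lam) * pochhammer (2 * lam) (2 * L)
          * (pochhammer (of_nat (2 * L) + 2 * lam) (2 * L))\<^sup>2 * pochhammer (\<mu> + 1) L * pochhammer (\<nu> + 1) L)"
proof -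
  have lam: "lam \<notin> \<int>\<^sub>\<le>\<^sub>0" and lam_half: "lam + 1/2 \<notin> \<int>\<^sub>\<le>\<^sub>0"
    using not_nonpos_Ints_half_double[OF lam2] by simp_all
  define t where "t = (2 :: complex) powr (1 - 2 * lam)"
  define u where "u = (2 :: complex) powr (\<mu> + \<nu>)"
  have u: "u \<noteq> 0" unfolding u_def by (simp add: complex_two_powr)
  have "(2 :: complex) powr of_nat (4 * L) = 16 ^ L"
    using powr_nat'[of 2 "4 * L"] by (simp add: power_mult)
  moreover have "of_nat (4 * L) - 2 * lam - \<mu> - \<nu> + 1 = of_nat (4 * L) + (1 - 2 * lam) - (\<mu> + \<nu>)"
    by (simp add: algebra_simps)
  ultimately have powr: "(2 :: complex) powr (of_nat (4 * L) - 2 * lam - \<mu> - \<nu> + 1) = 16 ^ L * t / u"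
    unfolding t_def u_def by (simp only: powr_add powr_diff)
  have Gamma_half: "Gamma (lam + 1/2) = t * of_real (sqrt pi) * Gamma (2 * lam) / Gamma lam"
    using Gamma_legendre_duplication_powr[OF lam2] Gamma_nonzero[OF lam]
    unfolding t_def by (simp add: field_simps)
  have Gamma_2L: "Gamma (of_nat (2 * L) + 2 * lam) = Gamma (2 * lam) * pochhammer (2 * lam) (2 * L)"
    using Gamma_add_of_nat[OF lam2, of "2 * L"] by (simp add: add.commute)
  have "t \<noteq> 0" unfolding t_def by (simp add: complex_two_powr)
  moreover have "of_real (sqrt pi) \<noteq> (0 :: complex)" by simp
  moreover have "Gamma lam \<noteq> 0" "Gamma (2 * lam) \<noteq> 0" "Gamma (\<mu> + 1) \<noteq> 0" "Gamma (\<nu> + 1) \<noteq> 0"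
    using Gamma_nonzero lam lam2 \<mu> \<nu> by blast+
  moreover have "pochhammer (\<mu> + 1) L \<noteq> 0" "pochhammer (\<nu> + 1) L \<noteq> 0" "pochhammer (2 * lam) (2 * L) \<noteq> 0"
      "pochhammer (1/2 :: complex) L \<noteq> 0"
    using pochhammer_add_of_nat_neq_0[OF \<mu>, of 0] pochhammer_add_of_nat_neq_0[OF \<nu>, of 0]
      pochhammer_add_of_nat_neq_0[OF lam2, of 0] pochhammer_half_neq_0 by simp_all
  moreover have "lam \<noteq> 0" using add_of_nat_neq_0[OF lam, of 0] by simp
  moreover define E where "E = of_nat (2 * L) + lam"
  moreover have "E \<noteq> 0" using add_of_nat_neq_0[OF lam, of "2 * L"] by (simp add: E_def add.commute)
  ultimately show ?thesis
    unfolding series_prefactor_def outer_coeff_def gpoch_half[OF \<mu>] gpoch_half[OF \<nu>]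
      powr Gamma_half Gamma_2L Gamma_plus1[OF lam] u_def[symmetric] E_def[symmetric]
    using u by (simp add: field_simps power2_eq_square)
qed

lemma series_prefactor_outer_inner:
  fixes lam \<mu> \<nu> k :: complex
  assumes "2 * lam \<notin> \<int>\<^sub>\<le>\<^sub>0" and "\<mu> + 1 \<notin> \<int>\<^sub>\<le>\<^sub>0" and "\<nu> + 1 \<notin> \<int>\<^sub>\<le>\<^sub>0"
  shows "series_prefactor lam \<mu> \<nu> * outer_coeff lam \<mu> \<nu> k L
       * hypF_term [of_nat L + 1/2] [of_nat (2*L) + lam + 1, of_nat L + \<mu> + 1] (- k\<^sup>2 / 4) i
       * hypF_term [of_nat L + 1/2] [of_nat (2*L) + lam + 1, of_nat L + \<nu> + 1] (- k\<^sup>2 / 4) j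
     = triple_term lam \<mu> \<nu> (- k\<^sup>2) L i j"
proof -
  have split: "pochhammer (1/2) (L + i) = pochhammer (1/2) L * pochhammer (of_nat L + 1/2 :: complex) i"
      "pochhammer (1/2) (L + j) = pochhammer (1/2) L * pochhammer (of_nat L + 1/2 :: complex) j"
      "pochhammer (\<mu> + 1) (L + i) = pochhammer (\<mu> + 1) L * pochhammer (of_nat L + \<mu> + 1) i"
      "pochhammer (\<nu> + 1) (L + j) = pochhammer (\<nu> + 1) L * pochhammer (of_nat L + \<nu> + 1) j"
    by (simp_all add: pochhammer_product' add_ac)
  have "(- k\<^sup>2) ^ 2 = k ^ 4" by algebra
  then have "(- k\<^sup>2) ^ (2 * L) = k ^ (4 * L)" by (simp only: power_mult)
  then have powers: "(- k\<^sup>2) ^ (2 * L + i + j) = k ^ (4 * L) * (- k\<^sup>2) ^ i * (- k\<^sup>2) ^ j"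
      "(4 :: complex) ^ (i + j) = 4 ^ i * 4 ^ j"
    by (simp_all only: power_add)
  have quarter: "(- k\<^sup>2 / 4) ^ n = (- k\<^sup>2) ^ n / 4 ^ n" for n
    by (simp only: power_divide)
  show ?thesis
    unfolding series_prefactor_mult_outer_coeff[OF assms] triple_term_def triple_coeff_def hypF_term_1F2
    unfolding split powers quarter
    by (simp only: divide_inverse inverse_mult_distrib mult_ac power2_eq_square)
qed

section \<open>Absolute convergence\<close>

lemma norm_add_of_nat_lower_bound:
  fixes z :: "'a :: real_normed_algebra_1"
  assumes "z \<notin> \<int>\<^sub>\<le>\<^sub>0"
  obtains d where "d > 0" "\<And>m. d * (real m + 1) \<le> norm (z + of_nat m)"
proof -
  define N where "N = nat \<lceil>2 * norm z\<rceil>"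
  define d0 where "d0 = Min ((\<lambda>m. norm (z + of_nat m) / (real m + 1)) ` {..N})"
  have "d0 > 0"
    unfolding d0_def using add_of_nat_neq_0[OF assms] by (subst Min_gr_iff) auto
  have "min d0 (1/4) * (real m + 1) \<le> norm (z + of_nat m)" for m
  proof (cases "m \<le> N")
    case True
    then have "d0 \<le> norm (z + of_nat m) / (real m + 1)" unfolding d0_def by (intro Min_le) auto
    then have "d0 * (real m + 1) \<le> norm (z + of_nat m)" by (simp add: field_simps)
    moreover have "min d0 (1/4) * (real m + 1) \<le> d0 * (real m + 1)" by (intro mult_right_mono) auto
    ultimately show ?thesis by linarith
  next
    case False
    then have "real m > 2 * norm z" "real m \<ge> 1" unfolding N_def by linarith+
    moreover have "norm (z + of_nat m) \<ge> real m - norm z"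
      using norm_diff_ineq[of "of_nat m :: 'a" z] by (simp add: add.commute)
    ultimately have "real m + 1 \<le> 4 * norm (z + of_nat m)" by linarith
    then have "1/4 * (real m + 1) \<le> norm (z + of_nat m)" by simp
    moreover have "min d0 (1/4) * (real m + 1) \<le> 1/4 * (real m + 1)" by (intro mult_right_mono) auto
    ultimately show ?thesis by linarith
  qed
  with \<open>d0 > 0\<close> show thesis by (intro that[of "min d0 (1/4)"]) auto
qed

lemma norm_pochhammer_lower_bound:
  fixes z :: "'a :: real_normed_field"
  assumes "d \<ge> 0" and "\<And>m. d * (real m + 1) \<le> norm (z + of_nat m)"
  shows "d ^ n * fact n \<le> norm (pochhammer (z + of_nat s) n)"
proof (induction n)
  case (Suc n)
  have "d * (real n + 1) \<le> d * (real (s + n) + 1)" using assms(1) by (intro mult_left_mono) auto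
  also have "\<dots> \<le> norm (z + of_nat s + of_nat n)" using assms(2)[of "s + n"] by (simp add: add.assoc)
  finally have step: "d * (real n + 1) \<le> norm (z + of_nat s + of_nat n)" .
  have "d ^ Suc n * fact (Suc n) = (d ^ n * fact n) * (d * (real n + 1))" by (simp add: algebra_simps)
  also have "\<dots> \<le> norm (pochhammer (z + of_nat s) n) * norm (z + of_nat s + of_nat n)"
    by (rule mult_mono[OF Suc.IH step]) (use assms(1) in auto)
  also have "\<dots> = norm (pochhammer (z + of_nat s) (Suc n))" by (simp add: pochhammer_Suc norm_mult)
  finally show ?case .
qed simp

lemma norm_pochhammer_le:
  fixes a :: "'a :: real_normed_field"
  shows "norm (pochhammer a n) \<le> (norm a + 1) ^ n * fact n"
proof (induction n)
  case (Suc n)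
  have "norm (a + of_nat n) \<le> norm a + real n"
    using norm_triangle_ineq[of a "of_nat n"] by simp
  also have "\<dots> \<le> (norm a + 1) * (real n + 1)"
    using mult_nonneg_nonneg[of "real n" "norm a"] by (simp add: algebra_simps)
  finally have step: "norm (a + of_nat n) \<le> (norm a + 1) * (real n + 1)" .
  have "norm (pochhammer a (Suc n)) = norm (pochhammer a n) * norm (a + of_nat n)"
    by (simp add: pochhammer_Suc norm_mult)
  also have "\<dots> \<le> ((norm a + 1) ^ n * fact n) * ((norm a + 1) * (real n + 1))"
    by (rule mult_mono[OF Suc.IH step]) auto
  also have "\<dots> = (norm a + 1) ^ Suc n * fact (Suc n)" by (simp add: algebra_simps)
  finally show ?case .
qed simp

lemma divide_fact_square_le:
  assumes "0 \<le> x" "n \<le> m"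
  shows "x / (fact m * fact m) \<le> x / (fact n :: real)"
proof -
  have "fact n \<le> (fact m :: real)" using assms(2) by (rule fact_mono)
  also have "(fact m :: real) \<le> fact m * fact m" by simp
  finally show ?thesis using assms(1) by (intro divide_left_mono) auto
qed

lemma hypF_term_1F2_norm_summable:
  assumes "b \<notin> \<int>\<^sub>\<le>\<^sub>0" "c \<notin> \<int>\<^sub>\<le>\<^sub>0"
  shows "summable (\<lambda>n. norm (hypF_term [a] [b, c] z n))"
proof -
  obtain db where db: "db > 0" "\<And>m. db * (real m + 1) \<le> norm (b + of_nat m)"
    using norm_add_of_nat_lower_bound[OF assms(1)] by blast
  obtain dc where dc: "dc > 0" "\<And>m. dc * (real m + 1) \<le> norm (c + of_nat m)"
    using norm_add_of_nat_lower_bound[OF assms(2)] by blast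
  define R where "R = (norm a + 1) * norm z / (db * dc)"
  have bound: "norm (hypF_term [a] [b, c] z n) \<le> R ^ n / fact n" for n
  proof -
    have "norm (hypF_term [a] [b, c] z n)
        = norm (pochhammer a n) * norm z ^ n / (norm (pochhammer b n) * norm (pochhammer c n) * fact n)"
      by (simp add: hypF_term_1F2 norm_mult norm_divide norm_power)
    also have "\<dots> \<le> ((norm a + 1) ^ n * fact n) * norm z ^ n / ((db ^ n * fact n) * (dc ^ n * fact n) * fact n)"
      using norm_pochhammer_le[of a n] norm_pochhammer_lower_bound[of db b n 0] db
        norm_pochhammer_lower_bound[of dc c n 0] dc
      by (intro frac_le mult_mono mult_right_mono) auto
    also have "\<dots> = R ^ n / (fact n * fact n)"
      unfolding R_def using db dc by (simp add: power_divide power_mult_distrib)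
    also have "\<dots> \<le> R ^ n / fact n"
      using db dc by (intro divide_fact_square_le) (auto simp: R_def)
    finally show ?thesis .
  qed
  have "summable (\<lambda>n. R ^ n / fact n)"
    using summable_exp[of R] by (simp add: field_simps)
  then show ?thesis by (rule summable_comparison_test[rotated]) (use bound in auto)
qed

lemma norm_summable_on_product:
  fixes f :: "'a \<Rightarrow> 'c :: real_normed_div_algebra" and g :: "'b \<Rightarrow> 'c"
  assumes "(\<lambda>x. norm (f x)) summable_on A" and "(\<lambda>y. norm (g y)) summable_on B"
  shows "(\<lambda>(x, y). norm (f x * g y)) summable_on A \<times> B"
proof -
  have "(\<lambda>y. norm (f x) * norm (g y)) summable_on B" for x
    using assms(2) by (rule summable_on_cmult_right)
  moreover have "(\<lambda>x. norm (f x) * infsum (\<lambda>y. norm (g y)) B) summable_on A"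
    using assms(1) by (rule summable_on_cmult_left)
  moreover have "0 \<le> infsum (\<lambda>y. norm (g y)) B" by (intro infsum_nonneg) auto
  ultimately show ?thesis
    using Infinite_Sum.abs_summable_on_Sigma_iff[where f="\<lambda>(x, y). f x * g y" and A=A and B="\<lambda>_. B"]
    by (simp add: norm_mult infsum_cmult_right' case_prod_unfold abs_mult)
qed

lemma exp_series_norm_summable_on: "(\<lambda>n. norm (x ^ n / fact n :: real)) summable_on UNIV"
  using summable_exp[of "\<bar>x\<bar>"]
  by (intro norm_summable_imp_summable_on) (simp add: field_simps power_abs)

definition triple_outer_factor :: "complex \<Rightarrow> complex \<Rightarrow> nat \<Rightarrow> complex" where
  "triple_outer_factor lam z L = lam * (pochhammer (lam + 1/2) (2 * L))\<^sup>2 * 16 ^ L * z ^ (2 * L)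
     / (fact (2 * L) * (of_nat (2 * L) + lam) * pochhammer (2 * lam) (2 * L)
        * (pochhammer (of_nat (2 * L) + 2 * lam) (2 * L))\<^sup>2)"

definition triple_inner_factor :: "complex \<Rightarrow> complex \<Rightarrow> complex \<Rightarrow> nat \<Rightarrow> nat \<Rightarrow> complex" where
  "triple_inner_factor lam c z L i = z ^ i * pochhammer (1/2) (L + i)
     / (pochhammer (of_nat (2 * L) + lam + 1) i * fact i * 4 ^ i * pochhammer (c + 1) (L + i))"

lemma triple_term_factor:
  "triple_term lam \<mu> \<nu> z L i j
     = triple_outer_factor lam z L * (triple_inner_factor lam \<mu> z L i * triple_inner_factor lam \<nu> z L j)"
proof -
  have "z1 * z2 * z3 * (lam * h1 * h2 * q * s / (f * e * x * y * i1 * i2 * (g1 * g2) * (p1 * p2))) / (m1 * m2)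
      = lam * q * s * z1 / (f * e * x * y)
        * (z2 * h1 / (i1 * g1 * p1 * m1) * (z3 * h2 / (i2 * g2 * p2 * m2)))"
    for z1 z2 z3 lam h1 h2 q s f e x y i1 i2 g1 g2 p1 p2 m1 m2 :: complex
    by (simp add: divide_inverse inverse_mult_distrib mult_ac)
  then show ?thesis
    unfolding triple_term_def triple_coeff_def triple_outer_factor_def triple_inner_factor_def power_add .
qed

lemma norm_triple_outer_factor_le:
  assumes "dl > 0" and "\<And>m. dl * (real m + 1) \<le> norm (lam + of_nat m)"
    and "d2 > 0" and "\<And>m. d2 * (real m + 1) \<le> norm (2 * lam + of_nat m)"
  shows "norm (triple_outer_factor lam z L)
     \<le> (norm lam / dl) * ((norm (lam + 1/2) + 1) ^ 4 * 16 * norm z ^ 2 / d2 ^ 6) ^ L / fact L"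
proof -
  define c where "c = norm (lam + 1/2) + 1"
  have "dl \<le> dl * (real (2 * L) + 1)" using assms(1) by simp
  also have "\<dots> \<le> norm (lam + of_nat (2 * L))" by (rule assms(2))
  finally have E: "dl \<le> norm (of_nat (2 * L) + lam)" by (simp add: add.commute)
  have "norm (triple_outer_factor lam z L)
      = norm lam * (norm (pochhammer (lam + 1/2) (2 * L)))\<^sup>2 * 16 ^ L * norm z ^ (2 * L)
        / (fact (2 * L) * norm (of_nat (2 * L) + lam) * norm (pochhammer (2 * lam) (2 * L))
           * (norm (pochhammer (of_nat (2 * L) + 2 * lam) (2 * L)))\<^sup>2)"
    by (simp add: triple_outer_factor_def norm_mult norm_divide norm_power)
  also have "\<dots> \<le> norm lam * (c ^ (2 * L) * fact (2 * L))\<^sup>2 * 16 ^ L * norm z ^ (2 * L)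
        / (fact (2 * L) * dl * (d2 ^ (2 * L) * fact (2 * L)) * (d2 ^ (2 * L) * fact (2 * L))\<^sup>2)"
    using norm_pochhammer_le[of "lam + 1/2" "2 * L"] E
      norm_pochhammer_lower_bound[of d2 "2 * lam" "2 * L" 0] 
      norm_pochhammer_lower_bound[of d2 "2 * lam" "2 * L" "2 * L"] assms(1,3,4)
    unfolding c_def
    by (intro frac_le mult_mono mult_right_mono mult_left_mono power_mono) (auto simp: add.commute)
  also have "\<dots> = (norm lam / dl) * (c ^ 4 * 16 * norm z ^ 2 / d2 ^ 6) ^ L / (fact (2 * L) * fact (2 * L))"
  proof -
    have "(c ^ 4 * 16 * norm z ^ 2 / d2 ^ 6) ^ L
        = c ^ (2 * L) * c ^ (2 * L) * 16 ^ L * norm z ^ (2 * L) / (d2 ^ (2 * L) * d2 ^ (2 * L) * d2 ^ (2 * L))"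
      by (simp add: power_divide power_mult_distrib flip: power_mult power_add)
    then show ?thesis using assms(1,3) by (simp add: field_simps power2_eq_square)
  qed
  also have "\<dots> \<le> (norm lam / dl) * (c ^ 4 * 16 * norm z ^ 2 / d2 ^ 6) ^ L / fact L"
    using assms(1,3) by (intro divide_fact_square_le) auto
  finally show ?thesis unfolding c_def .
qed

lemma norm_triple_inner_factor_le:
  assumes "dl > 0" and "\<And>m. dl * (real m + 1) \<le> norm (lam + of_nat m)"
    and "dc > 0" and "\<And>m. dc * (real m + 1) \<le> norm ((c + 1) + of_nat m)"
  shows "norm (triple_inner_factor lam c z L i) \<le> (3 / (2 * dc)) ^ L * (3 * norm z / (8 * dl * dc)) ^ i / fact i"
proof -
  have "norm (triple_inner_factor lam c z L i)
      = norm z ^ i * norm (pochhammer (1/2 :: complex) (L + i))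
        / (norm (pochhammer (lam + of_nat (2 * L + 1)) i) * fact i * 4 ^ i * norm (pochhammer (c + 1) (L + i)))"
    by (simp add: triple_inner_factor_def norm_mult norm_divide norm_power add_ac)
  also have "\<dots> \<le> norm z ^ i * ((3/2) ^ (L + i) * fact (L + i))
        / ((dl ^ i * fact i) * fact i * 4 ^ i * (dc ^ (L + i) * fact (L + i)))"
    using norm_pochhammer_le[of "1/2 :: complex" "L + i"]
      norm_pochhammer_lower_bound[of dl lam i "2 * L + 1"] norm_pochhammer_lower_bound[of dc "c + 1" "L + i" 0] assms
    by (intro frac_le mult_mono mult_left_mono) auto
  also have "\<dots> = (3 / (2 * dc)) ^ L * (3 * norm z / (8 * dl * dc)) ^ i / (fact i * fact i)"
  proof -
    have "(8 :: real) ^ i = 2 ^ i * 4 ^ i" by (simp flip: power_mult_distrib)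
    then show ?thesis using assms(1,3)
      by (simp add: power_add power_divide power_mult_distrib field_simps)
  qed
  also have "\<dots> \<le> (3 / (2 * dc)) ^ L * (3 * norm z / (8 * dl * dc)) ^ i / fact i"
    using assms(1,3) by (intro divide_fact_square_le) auto
  finally show ?thesis .
qed

lemma norm_triple_term_le:
  fixes lam \<mu> \<nu> z :: complex
  assumes dl: "dl > 0" "\<And>m. dl * (real m + 1) \<le> norm (lam + of_nat m)"
    and d2: "d2 > 0" "\<And>m. d2 * (real m + 1) \<le> norm (2 * lam + of_nat m)"
    and dm: "dm > 0" "\<And>m. dm * (real m + 1) \<le> norm ((\<mu> + 1) + of_nat m)"
    and dn: "dn > 0" "\<And>m. dn * (real m + 1) \<le> norm ((\<nu> + 1) + of_nat m)"
  shows "norm (triple_term lam \<mu> \<nu> z L i j)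
     \<le> norm lam / dl
         * (((norm (lam + 1/2) + 1) ^ 4 * 16 * norm z ^ 2 / d2 ^ 6 * (3 / (2 * dm)) * (3 / (2 * dn))) ^ L / fact L)
       * ((3 * norm z / (8 * dl * dm)) ^ i / fact i * ((3 * norm z / (8 * dl * dn)) ^ j / fact j))"
proof -
  have "norm (triple_term lam \<mu> \<nu> z L i j)
      \<le> (norm lam / dl * ((norm (lam + 1/2) + 1) ^ 4 * 16 * norm z ^ 2 / d2 ^ 6) ^ L / fact L)
        * (((3 / (2 * dm)) ^ L * (3 * norm z / (8 * dl * dm)) ^ i / fact i)
           * ((3 / (2 * dn)) ^ L * (3 * norm z / (8 * dl * dn)) ^ j / fact j))"
    unfolding triple_term_factor norm_mult
    using norm_triple_outer_factor_le[OF dl d2, of z L] norm_triple_inner_factor_le[OF dl dm, of z L i]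
      norm_triple_inner_factor_le[OF dl dn, of z L j] dl dm dn
    by (intro mult_mono) auto
  also have "\<dots> = norm lam / dl
         * (((norm (lam + 1/2) + 1) ^ 4 * 16 * norm z ^ 2 / d2 ^ 6 * (3 / (2 * dm)) * (3 / (2 * dn))) ^ L / fact L)
       * ((3 * norm z / (8 * dl * dm)) ^ i / fact i * ((3 * norm z / (8 * dl * dn)) ^ j / fact j))"
    by (simp only: power_mult_distrib divide_inverse mult_ac)
  finally show ?thesis .
qed

lemma triple_term_norm_summable:
  assumes lam2: "2 * lam \<notin> \<int>\<^sub>\<le>\<^sub>0" and \<mu>: "\<mu> + 1 \<notin> \<int>\<^sub>\<le>\<^sub>0" and \<nu>: "\<nu> + 1 \<notin> \<int>\<^sub>\<le>\<^sub>0"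
  shows "(\<lambda>(L, i, j). norm (triple_term lam \<mu> \<nu> z L i j)) summable_on UNIV"
proof -
  have lam: "lam \<notin> \<int>\<^sub>\<le>\<^sub>0" using not_nonpos_Ints_half_double[OF lam2] by simp
  obtain dl where dl: "dl > 0" "\<And>m. dl * (real m + 1) \<le> norm (lam + of_nat m)"
    using norm_add_of_nat_lower_bound[OF lam] by blast
  obtain d2 where d2: "d2 > 0" "\<And>m. d2 * (real m + 1) \<le> norm (2 * lam + of_nat m)"
    using norm_add_of_nat_lower_bound[OF lam2] by blast
  obtain dm where dm: "dm > 0" "\<And>m. dm * (real m + 1) \<le> norm ((\<mu> + 1) + of_nat m)"
    using norm_add_of_nat_lower_bound[OF \<mu>] by blast
  obtain dn where dn: "dn > 0" "\<And>m. dn * (real m + 1) \<le> norm ((\<nu> + 1) + of_nat m)"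
    using norm_add_of_nat_lower_bound[OF \<nu>] by blast
  define a where "a L = norm lam / dl * (((norm (lam + 1/2) + 1) ^ 4 * 16 * norm z ^ 2 / d2 ^ 6
    * (3 / (2 * dm)) * (3 / (2 * dn))) ^ L / fact L)" for L
  define b where "b i = (3 * norm z / (8 * dl * dm)) ^ i / fact i" for i
  define c where "c j = (3 * norm z / (8 * dl * dn)) ^ j / fact j" for j
  have "(\<lambda>(i, j). norm (b i * c j)) summable_on UNIV \<times> UNIV"
    unfolding b_def c_def by (intro norm_summable_on_product exp_series_norm_summable_on)
  moreover have "(\<lambda>L. norm (a L)) summable_on UNIV"
    unfolding a_def norm_mult using exp_series_norm_summable_on by (rule summable_on_cmult_right)
  ultimately have "(\<lambda>(L, ij). norm (a L * (\<lambda>(i, j). b i * c j) ij)) summable_on UNIV \<times> UNIV"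
    by (intro norm_summable_on_product) (simp_all add: case_prod_unfold)
  then have summable: "(\<lambda>x. norm ((\<lambda>(L, i, j). a L * (b i * c j)) x)) summable_on UNIV"
    by (simp only: case_prod_unfold UNIV_Times_UNIV)
  have bound: "norm (triple_term lam \<mu> \<nu> z L i j) \<le> norm (a L * (b i * c j))" for L i j
  proof -
    have "a L * (b i * c j) \<ge> 0"
      unfolding a_def b_def c_def using dl d2 dm dn by (intro mult_nonneg_nonneg divide_nonneg_nonneg) auto
    then have "norm (a L * (b i * c j)) = a L * (b i * c j)" by simp
    moreover have "norm (triple_term lam \<mu> \<nu> z L i j) \<le> a L * (b i * c j)"
      unfolding a_def b_def c_def by (rule norm_triple_term_le[OF dl d2 dm dn])
    ultimately show ?thesis by simp
  qed
  have "(\<lambda>x. norm ((\<lambda>(L, i, j). triple_term lam \<mu> \<nu> z L i j) x)) summable_on UNIV"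
    by (rule Infinite_Sum.abs_summable_on_comparison_test[OF summable]) (use bound in \<open>auto simp: case_prod_unfold\<close>)
  then show ?thesis by (simp only: case_prod_unfold)
qed

section \<open>Rearranging the triple series\<close>

lemma has_sum_diagonal_regroup:
  fixes f :: "nat \<times> nat \<times> nat \<Rightarrow> 'a :: {topological_comm_monoid_add, t3_space}"
  assumes "(f has_sum S) UNIV"
  shows "((\<lambda>(p, q). \<Sum>L\<le>min p q. f (L, p - L, q - L)) has_sum S) UNIV"
proof -
  have "(f has_sum S) UNIV
      = ((\<lambda>((p, q), L). f (L, p - L, q - L)) has_sum S) (SIGMA pq:UNIV. {..min (fst pq) (snd pq)})"
    by (rule has_sum_reindex_bij_witness[where i="\<lambda>((p, q), L). (L, p - L, q - L)"
          and j="\<lambda>(L, i, j). ((L + i, L + j), L)"]) auto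
  with assms have "((\<lambda>((p, q), L). f (L, p - L, q - L)) has_sum S) (SIGMA pq:UNIV. {..min (fst pq) (snd pq)})"
    by simp
  then show ?thesis
    by (rule has_sum_SigmaD) (auto intro!: has_sum_finite)
qed

lemma sums_antidiagonal_regroup:
  fixes g :: "nat \<times> nat \<Rightarrow> 'a :: {topological_comm_monoid_add, t3_space}"
  assumes "(g has_sum S) UNIV"
  shows "(\<lambda>n. \<Sum>p\<le>n. g (p, n - p)) sums S"
proof -
  have "(g has_sum S) UNIV = ((\<lambda>(n, p). g (p, n - p)) has_sum S) (SIGMA n:UNIV. {..n})"
    by (rule has_sum_reindex_bij_witness[where i="\<lambda>(n, p). (p, n - p)" and j="\<lambda>(p, q). (p + q, p)"]) auto
  with assms have "((\<lambda>(n, p). g (p, n - p)) has_sum S) (SIGMA n:UNIV. {..n})" by simp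
  then have "((\<lambda>n. \<Sum>p\<le>n. g (p, n - p)) has_sum S) UNIV"
    by (rule has_sum_SigmaD) (auto intro!: has_sum_finite)
  then show ?thesis by (rule has_sum_imp_sums)
qed

lemma has_sum_series_product:
  fixes a b :: "nat \<Rightarrow> 'a :: {banach, real_normed_div_algebra}"
  assumes "summable (\<lambda>n. norm (a n))" and "summable (\<lambda>n. norm (b n))"
  shows "((\<lambda>(i, j). a i * b j) has_sum (suminf a * suminf b)) UNIV"
proof -
  have "(\<lambda>n. norm (a n)) summable_on UNIV" "(\<lambda>n. norm (b n)) summable_on UNIV"
    using norm_summable_imp_summable_on[of "\<lambda>n. norm (a n)"] norm_summable_imp_summable_on[of "\<lambda>n. norm (b n)"]
      assms by simp_all
  then have norms: "(\<lambda>(i, j). norm (a i * b j)) summable_on UNIV \<times> UNIV"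
    by (rule norm_summable_on_product)
  have "(\<lambda>(i, j). a i * b j) summable_on UNIV \<times> UNIV"
    by (rule Infinite_Sum.abs_summable_summable) (use norms in \<open>simp add: case_prod_unfold\<close>)
  then obtain S where S: "((\<lambda>(i, j). a i * b j) has_sum S) (UNIV \<times> UNIV)"
    unfolding summable_on_def by blast
  have a: "(a has_sum suminf a) UNIV" and b: "(b has_sum suminf b) UNIV"
    using norm_summable_imp_has_sum[OF assms(1) summable_sums[OF summable_norm_cancel[OF assms(1)]]]
      norm_summable_imp_has_sum[OF assms(2) summable_sums[OF summable_norm_cancel[OF assms(2)]]] by simp_all
  from S have "((\<lambda>i. a i * suminf b) has_sum S) UNIV"
    by (rule has_sum_SigmaD) (use has_sum_cmult_right[OF b] in simp)
  moreover have "((\<lambda>i. a i * suminf b) has_sum suminf a * suminf b) UNIV"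
    using a by (rule has_sum_cmult_left)
  ultimately have "S = suminf a * suminf b" by (rule has_sum_unique)
  then show ?thesis using S by simp
qed

lemma series_prefactor_neq_0:
  assumes "2 * lam \<notin> \<int>\<^sub>\<le>\<^sub>0" "\<mu> + 1 \<notin> \<int>\<^sub>\<le>\<^sub>0" "\<nu> + 1 \<notin> \<int>\<^sub>\<le>\<^sub>0"
  shows "series_prefactor lam \<mu> \<nu> \<noteq> 0"
proof -
  have "lam \<notin> \<int>\<^sub>\<le>\<^sub>0" "lam + 1/2 \<notin> \<int>\<^sub>\<le>\<^sub>0"
    using not_nonpos_Ints_half_double[OF assms(1)] by simp_all
  moreover from this(1) have "lam + 1 \<notin> \<int>\<^sub>\<le>\<^sub>0" using plus_one_in_nonpos_Ints_imp by blast
  ultimately show ?thesis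
    using assms(2,3) unfolding series_prefactor_def by (auto intro!: Gamma_nonzero simp: complex_two_powr)
qed

lemma triple_term_has_sum_hypF:
  assumes lam2: "2 * lam \<notin> \<int>\<^sub>\<le>\<^sub>0" and \<mu>: "\<mu> + 1 \<notin> \<int>\<^sub>\<le>\<^sub>0" and \<nu>: "\<nu> + 1 \<notin> \<int>\<^sub>\<le>\<^sub>0"
    and \<mu>\<nu>: "\<mu> + \<nu> + 1 \<notin> \<int>\<^sub>\<le>\<^sub>0"
  shows "((\<lambda>(L, i, j). triple_term lam \<mu> \<nu> z L i j) has_sum
      hypF [1/2, \<mu>/2 + \<nu>/2 + 1/2, \<mu>/2 + \<nu>/2 + 1] [lam + 1, \<mu> + 1, \<nu> + 1, \<mu> + \<nu> + 1] z) UNIV"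
proof -
  have lam: "lam \<notin> \<int>\<^sub>\<le>\<^sub>0" using not_nonpos_Ints_half_double[OF lam2] by simp
  have "(\<lambda>(L, i, j). triple_term lam \<mu> \<nu> z L i j) summable_on UNIV"
    by (rule Infinite_Sum.abs_summable_summable)
      (use triple_term_norm_summable[OF lam2 \<mu> \<nu>, of z] in \<open>simp add: case_prod_unfold\<close>)
  then obtain S where S: "((\<lambda>(L, i, j). triple_term lam \<mu> \<nu> z L i j) has_sum S) UNIV"
    unfolding summable_on_def by blast
  have diagonal: "(\<Sum>L\<le>min p q. triple_term lam \<mu> \<nu> z L (p - L) (q - L))
      = z ^ (p + q) * pair_coeff lam p q / (pochhammer (\<mu> + 1) p * pochhammer (\<nu> + 1) q)" for p q
  proof -
    have "(\<Sum>L\<le>min p q. triple_term lam \<mu> \<nu> z L (p - L) (q - L))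
        = (\<Sum>L\<le>min p q. z ^ (p + q) / (pochhammer (\<mu> + 1) p * pochhammer (\<nu> + 1) q)
                         * triple_coeff lam L (p - L) (q - L))"
      by (intro sum.cong) (auto simp: triple_term_def)
    also have "\<dots> = z ^ (p + q) / (pochhammer (\<mu> + 1) p * pochhammer (\<nu> + 1) q) * pair_coeff lam p q"
      by (simp only: sum_distrib_left[symmetric] triple_coeff_diagonal_sum[OF lam2])
    finally show ?thesis by simp
  qed
  have antidiagonal: "(\<Sum>p\<le>n. z ^ n * pair_coeff lam p (n - p) / (pochhammer (\<mu> + 1) p * pochhammer (\<nu> + 1) (n - p)))
      = hypF_term [1/2, \<mu>/2 + \<nu>/2 + 1/2, \<mu>/2 + \<nu>/2 + 1] [lam + 1, \<mu> + 1, \<nu> + 1, \<mu> + \<nu> + 1] z n" for n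
  proof -
    have "(\<Sum>p\<le>n. z ^ n * pair_coeff lam p (n - p) / (pochhammer (\<mu> + 1) p * pochhammer (\<nu> + 1) (n - p)))
        = z ^ n * (\<Sum>p\<le>n. pair_coeff lam p (n - p) / (pochhammer (\<mu> + 1) p * pochhammer (\<nu> + 1) (n - p)))"
      by (simp add: sum_distrib_left)
    then show ?thesis
      unfolding pair_coeff_antidiagonal_sum[OF lam \<mu> \<nu> \<mu>\<nu>] by (simp add: hypF_term_def mult_ac)
  qed
  from sums_antidiagonal_regroup[OF has_sum_diagonal_regroup[OF S]]
  have "(\<lambda>n. \<Sum>p\<le>n. z ^ n * pair_coeff lam p (n - p) / (pochhammer (\<mu> + 1) p * pochhammer (\<nu> + 1) (n - p)))
      sums S"
    by (simp add: diagonal)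
  then have "hypF_term [1/2, \<mu>/2 + \<nu>/2 + 1/2, \<mu>/2 + \<nu>/2 + 1] [lam + 1, \<mu> + 1, \<nu> + 1, \<mu> + \<nu> + 1] z sums S"
    by (simp only: antidiagonal)
  then show ?thesis using S by (simp add: hypF_eq_suminf sums_iff)
qed

lemma triple_term_row_has_sum:
  assumes lam2: "2 * lam \<notin> \<int>\<^sub>\<le>\<^sub>0" and \<mu>: "\<mu> + 1 \<notin> \<int>\<^sub>\<le>\<^sub>0" and \<nu>: "\<nu> + 1 \<notin> \<int>\<^sub>\<le>\<^sub>0"
  shows "((\<lambda>(i, j). triple_term lam \<mu> \<nu> (- k\<^sup>2) L i j) has_sum
      series_prefactor lam \<mu> \<nu> * outer_coeff lam \<mu> \<nu> k L
      * hypF [of_nat L + 1/2] [of_nat (2*L) + lam + 1, of_nat L + \<mu> + 1] (- k\<^sup>2 / 4)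
      * hypF [of_nat L + 1/2] [of_nat (2*L) + lam + 1, of_nat L + \<nu> + 1] (- k\<^sup>2 / 4)) UNIV"
proof -
  have lam: "lam \<notin> \<int>\<^sub>\<le>\<^sub>0" using not_nonpos_Ints_half_double[OF lam2] by simp
  have shift: "of_nat (2 * L) + lam + 1 \<notin> \<int>\<^sub>\<le>\<^sub>0" "of_nat L + \<mu> + 1 \<notin> \<int>\<^sub>\<le>\<^sub>0" "of_nat L + \<nu> + 1 \<notin> \<int>\<^sub>\<le>\<^sub>0"
    using not_nonpos_Ints_add_of_nat[OF lam, of "2 * L + 1"] not_nonpos_Ints_add_of_nat[OF \<mu>, of L]
      not_nonpos_Ints_add_of_nat[OF \<nu>, of L]
    by (simp_all add: add_ac)
  show ?thesis
    using has_sum_cmult_right[OF has_sum_series_product[OF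
          hypF_term_1F2_norm_summable[OF shift(1,2)] hypF_term_1F2_norm_summable[OF shift(1,3)]],
        of "series_prefactor lam \<mu> \<nu> * outer_coeff lam \<mu> \<nu> k L"]
    by (simp add: hypF_eq_suminf series_prefactor_outer_inner[OF lam2 \<mu> \<nu>, symmetric] case_prod_unfold mult_ac)
qed

theorem theorem3:
  fixes k \<mu> \<nu> lam :: complex
  assumes "lam \<noteq> 0"
    and "2 * lam \<notin> \<int>\<^sub>\<le>\<^sub>0"
    and "\<mu> + 1 \<notin> \<int>\<^sub>\<le>\<^sub>0" and "\<nu> + 1 \<notin> \<int>\<^sub>\<le>\<^sub>0" and "\<mu> + \<nu> + 1 \<notin> \<int>\<^sub>\<le>\<^sub>0"
  defines "T \<equiv> (\<lambda>L::nat.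
      (-1) ^ (2*L) * k ^ (4*L) * (pochhammer (lam + 1/2) (2*L))\<^sup>2 * Gamma (of_nat (2*L) + 2*lam)
      * 2 powr (of_nat (4*L) - 2*lam - \<mu> - \<nu> + 1)
      / (fact (2*L) * (of_nat (2*L) + lam) * (pochhammer (2*lam) (2*L))\<^sup>2
         * (pochhammer (of_nat (2*L) + 2*lam) (2*L))\<^sup>2
         * gpoch (of_nat L + 1/2) (\<mu> + 1/2) * gpoch (of_nat L + 1/2) (\<nu> + 1/2))
      * hypF [of_nat L + 1/2] [of_nat (2*L) + lam + 1, of_nat L + \<mu> + 1] (- k\<^sup>2 / 4)
      * hypF [of_nat L + 1/2] [of_nat (2*L) + lam + 1, of_nat L + \<nu> + 1] (- k\<^sup>2 / 4))"
  shows "summable T \<and>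
    hypF [1/2, \<mu>/2 + \<nu>/2 + 1/2, \<mu>/2 + \<nu>/2 + 1] [lam + 1, \<mu> + 1, \<nu> + 1, \<mu> + \<nu> + 1] (- k\<^sup>2)
    = Gamma (lam + 1) * 2 powr (\<mu> + \<nu>) * Gamma (\<mu> + 1) * Gamma (\<nu> + 1)
      / (of_real (sqrt pi) * Gamma (lam + 1/2) * (Gamma lam)\<^sup>2) * (\<Sum>L. T L)"
proof -
  \<comment> \<open>The hypothesis \<open>lam \<noteq> 0\<close> is implied by \<open>2 * lam \<notin> \<int>\<^sub>\<le>\<^sub>0\<close>.\<close>
  let ?F = "hypF [1/2, \<mu>/2 + \<nu>/2 + 1/2, \<mu>/2 + \<nu>/2 + 1] [lam + 1, \<mu> + 1, \<nu> + 1, \<mu> + \<nu> + 1] (- k\<^sup>2)"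
  define c where "c = series_prefactor lam \<mu> \<nu>"
  have "c \<noteq> 0" unfolding c_def using series_prefactor_neq_0 assms(2-4) .
  have S: "((\<lambda>(L, i, j). triple_term lam \<mu> \<nu> (- k\<^sup>2) L i j) has_sum ?F) (UNIV \<times> UNIV)"
    using triple_term_has_sum_hypF[OF assms(2-5)] by (simp only: UNIV_Times_UNIV)
  have rows: "((\<lambda>(i, j). triple_term lam \<mu> \<nu> (- k\<^sup>2) L i j) has_sum c * T L) UNIV" for L
    using triple_term_row_has_sum[OF assms(2-4), of k L] by (simp add: T_def c_def outer_coeff_def mult.assoc)
  have "((\<lambda>L. c * T L) has_sum ?F) UNIV"
    using S by (rule has_sum_SigmaD) (use rows in \<open>simp add: case_prod_unfold\<close>)
  then have "(\<lambda>L. c * T L / c) sums (?F / c)"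
    by (intro sums_divide has_sum_imp_sums)
  with \<open>c \<noteq> 0\<close> show ?thesis
    by (simp add: sums_iff c_def series_prefactor_def)
qed

end
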